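(* Let $S$ be an additively reduced semidomain and $G$ a torsion-free abelian group. Let $f=\sum_{i=0}^n s_ix^{g_i}\in S[G]$ with $g_0>g_1>\dots>g_n$ and $s_i\in S\setminus\{0\}$. Then: (1) if $|\operatorname{supp}(f)|\ge2$ and $2g_{n-1}>g_0+g_n$, then $f$ is monolithic; (2) if $|\operatorname{supp}(f)|>3$ and $2g_{n-1}\ge g_0+g_n$, then $f$ is monolithic.
   Context: A semidomain is a subsemiring (containing $0$ and $1$) of an integral domain. $S$ is additively reduced if $0$ is the only invertible element of $(S,+)$. $G$ carries a fixed total order compatible with addition. $S[G]$ is the semidomain of formal finite sums $\sum_{g\in G}s_gx^g$ with polynomial operations; $\operatorname{supp}(f)$ is the set of exponents with nonzero coefficient. A nonzero $f\in S[G]$ is monolithic if whenever $f=pq$ with $p,q\in S[G]$, one of $p,q$ is a monomial $sx^g$. *)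

theory Defs
  imports "HOL-Library.Poly_Mapping"
begin

definition semidomain :: "'a::idom set \<Rightarrow> bool" where
  "semidomain S \<longleftrightarrow> 0 \<in> S \<and> 1 \<in> S \<and>
     (\<forall>x\<in>S. \<forall>y\<in>S. x + y \<in> S \<and> x * y \<in> S)"

definition add_reduced :: "'a::idom set \<Rightarrow> bool" where
  "add_reduced S \<longleftrightarrow> (\<forall>x\<in>S. (\<exists>y\<in>S. x + y = 0) \<longrightarrow> x = 0)"

text \<open>The semigroup semiring S[G]: finitely supported functions G \<Rightarrow> S,
with convolution product (from Poly_Mapping).\<close>
definition semigroup_semiring :: "'a::idom set \<Rightarrow> ('g::ab_group_add \<Rightarrow>\<^sub>0 'a) set" where
  "semigroup_semiring S = {f. \<forall>g. Poly_Mapping.lookup f g \<in> S}"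

definition is_monomial :: "'a::idom set \<Rightarrow> ('g::ab_group_add \<Rightarrow>\<^sub>0 'a) \<Rightarrow> bool" where
  "is_monomial S p \<longleftrightarrow> (\<exists>s\<in>S. \<exists>g. p = Poly_Mapping.single g s)"

definition monolithic :: "'a::idom set \<Rightarrow> ('g::ab_group_add \<Rightarrow>\<^sub>0 'a) \<Rightarrow> bool" where
  "monolithic S f \<longleftrightarrow> f \<noteq> 0 \<and>
     (\<forall>p\<in>semigroup_semiring S. \<forall>q\<in>semigroup_semiring S.
        f = p * q \<longrightarrow> is_monomial S p \<or> is_monomial S q)"

end

theory Submission
  imports Defs "HOL-Library.Set_Algebras"
begin

text \<open>Suppose \<open>f = p q\<close> with neither factor a monomial. Because \<open>S\<close> is additively reduced,
no coefficient of \<open>p q\<close> can cancel, so \<open>supp f = supp p + supp q\<close>. Let \<open>a0 < a1 \<le> aM\<close> be the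
two least and the largest exponents of \<open>p\<close>, and \<open>b0 < b1 \<le> bM\<close> those of \<open>q\<close>. The second
least exponent \<open>g(n-1)\<close> of \<open>f\<close> is at most \<open>a1 + b0 \<le> aM + b0\<close> and at most
\<open>a0 + b1 \<le> a0 + bM\<close>; adding gives \<open>2 g(n-1) \<le> g(0) + g(n)\<close>. In the case of equality all these
inequalities are tight, so \<open>supp p = {a0, aM}\<close>, \<open>supp q = {b0, bM}\<close> and \<open>aM + b0 = a0 + bM\<close>,
leaving at most three exponents in \<open>f\<close>.\<close>

lemma lookup_mult_ab_group:
  fixes p q :: "'g::ab_group_add \<Rightarrow>\<^sub>0 'a::semiring_0"
  shows "Poly_Mapping.lookup (p * q) k =
    (\<Sum>l\<in>Poly_Mapping.keys p. Poly_Mapping.lookup p l * Poly_Mapping.lookup q (k - l))"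
proof -
  have inner: "(\<Sum>r. Poly_Mapping.lookup q r when k = l + r) = Poly_Mapping.lookup q (k - l)" for l
  proof -
    have "(\<lambda>r. Poly_Mapping.lookup q r when k = l + r) = (\<lambda>r. Poly_Mapping.lookup q r when r = k - l)"
      by (rule ext, rule when_cong) (auto simp: algebra_simps)
    then show ?thesis by (simp only:) (rule Sum_any_when_equal)
  qed
  have "Poly_Mapping.lookup (p * q) k = (\<Sum>l. Poly_Mapping.lookup p l * Poly_Mapping.lookup q (k - l))"
    by (simp add: lookup_mult inner)
  also have "\<dots> = (\<Sum>l\<in>Poly_Mapping.keys p. Poly_Mapping.lookup p l * Poly_Mapping.lookup q (k - l))"
    by (rule Sum_any.expand_superset) (auto simp: in_keys_iff)
  finally show ?thesis .
qed

lemma semidomain_sum_closed: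
  assumes "semidomain S" "\<And>x. x \<in> A \<Longrightarrow> h x \<in> S"
  shows "sum h A \<in> S"
  using assms(2) by (induction A rule: infinite_finite_induct) (use assms(1) in \<open>auto simp: semidomain_def\<close>)

lemma add_reduced_sum_neq_0:
  assumes "semidomain S" "add_reduced S" "finite A" "\<And>x. x \<in> A \<Longrightarrow> h x \<in> S"
    and "a \<in> A" "h a \<noteq> 0"
  shows "sum h A \<noteq> 0"
proof
  assume "sum h A = 0"
  moreover have "sum h A = h a + sum h (A - {a})"
    using assms(3,5) by (rule sum.remove)
  ultimately have "h a + sum h (A - {a}) = 0" by simp
  moreover have "sum h (A - {a}) \<in> S"
    using assms(4) by (intro semidomain_sum_closed[OF assms(1)]) auto
  ultimately have "h a = 0"
    using assms(2,4,5) unfolding add_reduced_def by metis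
  with assms(6) show False ..
qed

lemma keys_mult_semigroup_semiring:
  fixes p q :: "'g::ab_group_add \<Rightarrow>\<^sub>0 'a::idom"
  assumes "semidomain S" "add_reduced S" "p \<in> semigroup_semiring S" "q \<in> semigroup_semiring S"
  shows "Poly_Mapping.keys (p * q) = Poly_Mapping.keys p + Poly_Mapping.keys q"
proof
  show "Poly_Mapping.keys (p * q) \<subseteq> Poly_Mapping.keys p + Poly_Mapping.keys q"
    using keys_mult[of p q] unfolding set_plus_def by blast
next
  show "Poly_Mapping.keys p + Poly_Mapping.keys q \<subseteq> Poly_Mapping.keys (p * q)"
  proof
    fix x assume "x \<in> Poly_Mapping.keys p + Poly_Mapping.keys q"
    then obtain a b where x: "x = a + b" and ab: "a \<in> Poly_Mapping.keys p" "b \<in> Poly_Mapping.keys q"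
      by (rule set_plus_elim)
    have "(\<Sum>l\<in>Poly_Mapping.keys p. Poly_Mapping.lookup p l * Poly_Mapping.lookup q (a + b - l)) \<noteq> 0"
    proof (rule add_reduced_sum_neq_0[OF assms(1,2) _ _ ab(1)])
      show "Poly_Mapping.lookup p l * Poly_Mapping.lookup q (a + b - l) \<in> S" for l
        using assms(1,3,4) unfolding semidomain_def semigroup_semiring_def by auto
      show "Poly_Mapping.lookup p a * Poly_Mapping.lookup q (a + b - a) \<noteq> 0"
        using ab by (simp add: in_keys_iff)
    qed simp
    then show "x \<in> Poly_Mapping.keys (p * q)"
      by (simp add: x in_keys_iff lookup_mult_ab_group)
  qed
qed

lemma not_monomial_card_keys:
  assumes "semidomain S" "p \<in> semigroup_semiring S" "\<not> is_monomial S p"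
  shows "2 \<le> card (Poly_Mapping.keys p)"
proof (rule ccontr)
  assume "\<not> ?thesis"
  then have "card (Poly_Mapping.keys p) \<le> Suc 0" by simp
  then obtain k where k: "Poly_Mapping.keys p \<subseteq> {k}"
    by (metis card_le_Suc0_iff_eq empty_subsetI finite_keys subsetI singleton_iff all_not_in_conv)
  have "p = Poly_Mapping.single k (Poly_Mapping.lookup p k)"
    by (rule poly_mapping_eqI) (use k in \<open>auto simp: lookup_single when_def in_keys_iff\<close>)
  then show False
    using assms unfolding is_monomial_def semigroup_semiring_def by blast
qed

lemma not_monolithic_keys_sumset:
  fixes f :: "'g::ab_group_add \<Rightarrow>\<^sub>0 'a::idom"
  assumes "semidomain S" "add_reduced S" "f \<noteq> 0" "\<not> monolithic S f"
  obtains P Q where "finite P" "finite Q" "2 \<le> card P" "2 \<le> card Q" "Poly_Mapping.keys f = P + Q"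
proof -
  obtain p q where pq: "p \<in> semigroup_semiring S" "q \<in> semigroup_semiring S" "f = p * q"
      "\<not> is_monomial S p" "\<not> is_monomial S q"
    using assms(3,4) unfolding monolithic_def by blast
  show thesis
    using that[of "Poly_Mapping.keys p" "Poly_Mapping.keys q"]
      not_monomial_card_keys[OF assms(1) pq(1,4)] not_monomial_card_keys[OF assms(1) pq(2,5)]
      keys_mult_semigroup_semiring[OF assms(1,2) pq(1,2)] pq(3)
    by simp
qed

lemma Min_set_plus:
  fixes A B :: "'a::linordered_ab_semigroup_add set"
  assumes "finite A" "finite B" "A \<noteq> {}" "B \<noteq> {}"
  shows "Min (A + B) = Min A + Min B"
proof (rule Min_eqI)
  show "finite (A + B)" using assms(1,2) by (rule finite_set_plus)
  show "Min A + Min B \<le> x" if "x \<in> A + B" for x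
    using that by (rule set_plus_elim) (simp add: add_mono assms)
  show "Min A + Min B \<in> A + B" using assms by (simp add: set_plus_intro)
qed

lemma Max_set_plus:
  fixes A B :: "'a::linordered_ab_semigroup_add set"
  assumes "finite A" "finite B" "A \<noteq> {}" "B \<noteq> {}"
  shows "Max (A + B) = Max A + Max B"
proof (rule Max_eqI)
  show "finite (A + B)" using assms(1,2) by (rule finite_set_plus)
  show "x \<le> Max A + Max B" if "x \<in> A + B" for x
    using that by (rule set_plus_elim) (simp add: add_mono assms)
  show "Max A + Max B \<in> A + B" using assms by (simp add: set_plus_intro)
qed

lemma obtain_second_least:
  fixes P :: "'a::linorder set"
  assumes "finite P" "2 \<le> card P"
  obtains a where "a \<in> P" "Min P < a" "\<And>x. x \<in> P \<Longrightarrow> x \<noteq> Min P \<Longrightarrow> a \<le> x"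
proof
  have "P - {Min P} \<noteq> {}"
  proof
    assume "P - {Min P} = {}"
    then have "card P \<le> card {Min P}" by (intro card_mono) auto
    with assms(2) show False by simp
  qed
  then show "Min (P - {Min P}) \<in> P" "Min P < Min (P - {Min P})"
    using assms(1) Min_in[of "P - {Min P}"] Min_le[of P] by (auto simp: order.strict_iff_order)
  show "Min (P - {Min P}) \<le> x" if "x \<in> P" "x \<noteq> Min P" for x
    using assms(1) that by simp
qed

lemma add_le_add_eqD:
  fixes a b c d :: "'a::ordered_cancel_ab_semigroup_add"
  assumes "a \<le> b" "c \<le> d" "b + d \<le> a + c"
  shows "a = b" "c = d"
  using assms add_less_le_mono[of a b c d] add_le_less_mono[of a b c d]
  by (auto simp: order.strict_iff_order dest: order.antisym)

lemma card_set_plus_two_point_le: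
  fixes a0 a1 b0 b1 :: "'a::ab_semigroup_add"
  assumes "P \<subseteq> {a0, a1}" "Q \<subseteq> {b0, b1}" "a1 + b0 = a0 + b1"
  shows "card (P + Q) \<le> 3"
proof -
  have "P + Q \<subseteq> {a0 + b0, a1 + b0, a1 + b1}"
    using assms by (auto elim!: set_plus_elim)
  then have "card (P + Q) \<le> card {a0 + b0, a1 + b0, a1 + b1}"
    by (rule card_mono[rotated]) simp
  also have "\<dots> \<le> 3" by (simp add: card_insert_if)
  finally show ?thesis .
qed

lemma sumset_second_least_bound:
  fixes P Q :: "'g::linordered_ab_group_add set"
  assumes "finite P" "finite Q" "2 \<le> card P" "2 \<le> card Q"
    and second_least: "\<And>x. x \<in> P + Q \<Longrightarrow> x \<noteq> Min (P + Q) \<Longrightarrow> c \<le> x"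
  shows "c + c \<le> Max (P + Q) + Min (P + Q)"
    and "c + c = Max (P + Q) + Min (P + Q) \<Longrightarrow> card (P + Q) \<le> 3"
proof -
  have ne: "P \<noteq> {}" "Q \<noteq> {}" using assms(3,4) by auto
  obtain a1 where a1: "a1 \<in> P" "Min P < a1" "\<And>x. x \<in> P \<Longrightarrow> x \<noteq> Min P \<Longrightarrow> a1 \<le> x"
    using obtain_second_least[OF assms(1,3)] by blast
  obtain b1 where b1: "b1 \<in> Q" "Min Q < b1" "\<And>y. y \<in> Q \<Longrightarrow> y \<noteq> Min Q \<Longrightarrow> b1 \<le> y"
    using obtain_second_least[OF assms(2,4)] by blast
  have Min_PQ: "Min (P + Q) = Min P + Min Q" and Max_PQ: "Max (P + Q) = Max P + Max Q"
    using assms(1,2) ne by (simp_all add: Min_set_plus Max_set_plus)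
  have A_le: "a1 + Min Q \<le> Max P + Min Q" and B_le: "Min P + b1 \<le> Min P + Max Q"
    using assms(1,2) a1(1) b1(1) by (simp_all add: add_right_mono add_left_mono)
  have c_le_A: "c \<le> a1 + Min Q"
    using second_least[of "a1 + Min Q"] a1 assms(2) ne by (simp add: Min_PQ set_plus_intro)
  have c_le_B: "c \<le> Min P + b1"
    using second_least[of "Min P + b1"] b1 assms(1) ne by (simp add: Min_PQ set_plus_intro)
  have bound: "(Max P + Min Q) + (Min P + Max Q) = Max (P + Q) + Min (P + Q)"
    by (simp add: Min_PQ Max_PQ algebra_simps)
  have "c + c \<le> (a1 + Min Q) + (Min P + b1)"
    using c_le_A c_le_B by (rule add_mono)
  also have "\<dots> \<le> (Max P + Min Q) + (Min P + Max Q)"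
    using A_le B_le by (rule add_mono)
  finally show "c + c \<le> Max (P + Q) + Min (P + Q)"
    unfolding bound .
  assume eq: "c + c = Max (P + Q) + Min (P + Q)"
  have "(Max P + Min Q) + (Min P + Max Q) \<le> (a1 + Min Q) + (Min P + b1)"
    using \<open>c + c \<le> (a1 + Min Q) + (Min P + b1)\<close> unfolding bound eq[symmetric] .
  then have "a1 + Min Q = Max P + Min Q" "Min P + b1 = Min P + Max Q"
    using add_le_add_eqD[OF A_le B_le] by blast+
  then have a1_Max: "a1 = Max P" and b1_Max: "b1 = Max Q"
    by simp_all
  have "(a1 + Min Q) + (Min P + b1) \<le> c + c"
    unfolding a1_Max b1_Max eq bound[symmetric] by (rule order.refl)
  then have "c = a1 + Min Q" "c = Min P + b1"
    using add_le_add_eqD[OF c_le_A c_le_B] by blast+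
  then have cross: "Max P + Min Q = Min P + Max Q"
    by (simp add: a1_Max b1_Max)
  have P_two: "x = Min P \<or> x = Max P" if "x \<in> P" for x
    using a1(3)[OF that] assms(1) that by (auto simp: a1_Max intro: order.antisym)
  have Q_two: "y = Min Q \<or> y = Max Q" if "y \<in> Q" for y
    using b1(3)[OF that] assms(2) that by (auto simp: b1_Max intro: order.antisym)
  have "P \<subseteq> {Min P, Max P}" "Q \<subseteq> {Min Q, Max Q}"
    using a1(3) b1(3) assms(1,2) by (auto simp: a1_Max b1_Max intro: order.antisym)
  then show "card (P + Q) \<le> 3"
    using cross by (rule card_set_plus_two_point_le)
qed

lemma keys_sum_single_inj:
  assumes "finite A" "inj_on g A" "\<And>i. i \<in> A \<Longrightarrow> s i \<noteq> 0"
  shows "Poly_Mapping.keys (\<Sum>i\<in>A. Poly_Mapping.single (g i) (s i)) = g ` A"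
proof
  show "Poly_Mapping.keys (\<Sum>i\<in>A. Poly_Mapping.single (g i) (s i)) \<subseteq> g ` A"
    using keys_sum[of "\<lambda>i. Poly_Mapping.single (g i) (s i)" A] by auto
  show "g ` A \<subseteq> Poly_Mapping.keys (\<Sum>i\<in>A. Poly_Mapping.single (g i) (s i))"
  proof
    fix x assume "x \<in> g ` A"
    then obtain j where j: "j \<in> A" "x = g j" by blast
    have "(\<Sum>i\<in>A. s i when g i = g j) = (\<Sum>i\<in>A. if i = j then s i else 0)"
      using assms(2) j(1) by (intro sum.cong) (auto simp: inj_on_eq_iff)
    then have "Poly_Mapping.lookup (\<Sum>i\<in>A. Poly_Mapping.single (g i) (s i)) x = s j"
      using assms(1) j by (simp add: lookup_sum lookup_single)
    then show "x \<in> Poly_Mapping.keys (\<Sum>i\<in>A. Poly_Mapping.single (g i) (s i))"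
      using assms(3) j(1) by (simp add: in_keys_iff)
  qed
qed

lemma strictly_decreasing_image_atMost:
  fixes g :: "nat \<Rightarrow> 'a::linorder"
  assumes "\<And>i j. i < j \<Longrightarrow> j \<le> n \<Longrightarrow> g j < g i"
  shows "inj_on g {..n}" and "Min (g ` {..n}) = g n" and "Max (g ` {..n}) = g 0"
    and "\<And>x. x \<in> g ` {..n} \<Longrightarrow> x \<noteq> g n \<Longrightarrow> g (n - 1) \<le> x"
proof -
  have le: "g j \<le> g i" if "i \<le> j" "j \<le> n" for i j
    using assms[of i j] that by (cases "i = j") auto
  show "inj_on g {..n}"
  proof (rule inj_onI)
    fix i j assume "i \<in> {..n}" "j \<in> {..n}" "g i = g j"
    then show "i = j"
      using assms[of i j] assms[of j i] by (cases i j rule: linorder_cases) auto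
  qed
  show "Min (g ` {..n}) = g n"
    by (rule Min_eqI) (auto simp: le)
  show "Max (g ` {..n}) = g 0"
    by (rule Max_eqI) (auto simp: le)
  show "g (n - 1) \<le> x" if x: "x \<in> g ` {..n}" and x_ne: "x \<noteq> g n" for x
  proof -
    obtain j where j: "j \<le> n" "x = g j" using x by blast
    with x_ne have "j \<le> n - 1" by (cases "j = n") auto
    then show ?thesis using j by (simp add: le)
  qed
qed

theorem lemma3p3:
  fixes S :: "'a::idom set"
    and f :: "'g::linordered_ab_group_add \<Rightarrow>\<^sub>0 'a"
    and n :: nat and s :: "nat \<Rightarrow> 'a" and g :: "nat \<Rightarrow> 'g"
  assumes "semidomain S" and "add_reduced S"
    and "\<And>i j. i < j \<Longrightarrow> j \<le> n \<Longrightarrow> g j < g i"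
    and "\<And>i. i \<le> n \<Longrightarrow> s i \<in> S - {0}"
    and "f = (\<Sum>i\<le>n. Poly_Mapping.single (g i) (s i))"
  shows "(card (Poly_Mapping.keys f) \<ge> 2 \<and> g (n - 1) + g (n - 1) > g 0 + g n \<longrightarrow> monolithic S f)
       \<and> (card (Poly_Mapping.keys f) > 3 \<and> g (n - 1) + g (n - 1) \<ge> g 0 + g n \<longrightarrow> monolithic S f)"
proof -
  note g = strictly_decreasing_image_atMost[OF assms(3)]
  have keys_f: "Poly_Mapping.keys f = g ` {..n}"
    using keys_sum_single_inj[of "{..n}" g s] g(1) assms(4,5) by simp
  have not_monolithic: "g (n - 1) + g (n - 1) \<le> g 0 + g n \<and>
      (g (n - 1) + g (n - 1) = g 0 + g n \<longrightarrow> card (Poly_Mapping.keys f) \<le> 3)"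
    if not_mono: "\<not> monolithic S f" and two_keys: "2 \<le> card (Poly_Mapping.keys f)"
  proof -
    have "f \<noteq> 0" using two_keys by auto
    then obtain P Q where PQ: "finite P" "finite Q" "2 \<le> card P" "2 \<le> card Q"
        and keys_PQ: "Poly_Mapping.keys f = P + Q"
      using not_monolithic_keys_sumset[OF assms(1,2) _ not_mono] by blast
    have "\<And>x. x \<in> P + Q \<Longrightarrow> x \<noteq> Min (P + Q) \<Longrightarrow> g (n - 1) \<le> x"
      using g(2,4) keys_f keys_PQ by simp
    from sumset_second_least_bound[OF PQ this] show ?thesis
      using g(2,3) keys_f keys_PQ by simp
  qed
  show ?thesis
  proof (intro conjI impI)
    assume "2 \<le> card (Poly_Mapping.keys f) \<and> g 0 + g n < g (n - 1) + g (n - 1)"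
    then show "monolithic S f"
      using not_monolithic by (meson not_le)
  next
    assume "3 < card (Poly_Mapping.keys f) \<and> g 0 + g n \<le> g (n - 1) + g (n - 1)"
    then show "monolithic S f"
      using not_monolithic by force
  qed
qed

end
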